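(* Consider the symmetric matrix model $f_{i,j}(\mathbf u)=\sum_{k=1}^H u_{k,i}u_{k,j}$, $i,j\in\{1,\ldots,p\}$, with parameters $\mathbf u=(u_{k,i})\in\mathbb R^{H\times p}$, trained by gradient flow $\frac{d\mathbf u}{dt}=-\frac1T\partial_{\mathbf u}L(\mathbf u)$ on $L(\mathbf u)=\frac12\sum_{i,j=1}^p(f_{i,j}(\mathbf u)-\delta_{i=j})^2$, and write $f_{i,j}(t)=f_{i,j}(\mathbf u(t))$, $\Theta_{i,j;i',j'}(t)=\Theta_{i,j;i',j'}(\mathbf u(t))$. Then the statement "$\Theta_{i,j;i',j'}(0)=\lim_{t\to\infty}\Theta_{i,j;i',j'}(t)$ for all $i,j,i',j'\in\{1,\ldots,p\}$" is equivalent to the statement "$f_{i,j}(0)=\lim_{t\to\infty}f_{i,j}(t)$ for all $i,j\in\{1,\ldots,p\}$".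
   Context: The neural tangent kernel (NTK) of the model is $\Theta_{i,j;i',j'}(\mathbf u)=\sum_{k=1}^H\sum_{l=1}^p\frac{\partial f_{i,j}(\mathbf u)}{\partial u_{k,l}}\frac{\partial f_{i',j'}(\mathbf u)}{\partial u_{k,l}}$. *)

theory Defs
  imports "HOL-Analysis.Analysis"
begin

text \<open>Parameters u = (u_{k,l}) in R^{H x p}, represented as real^'p^'h
  (index type 'h of size H, index type 'p of size p).\<close>

definition upd_param :: "real^'p^'h \<Rightarrow> 'h \<Rightarrow> 'p \<Rightarrow> real \<Rightarrow> real^'p^'h" where
  "upd_param u k l s = (\<chi> k'. \<chi> l'. if k' = k \<and> l' = l then s else u $ k' $ l')"

definition partial_u :: "(real^'p^'h \<Rightarrow> real) \<Rightarrow> real^'p^'h \<Rightarrow> 'h \<Rightarrow> 'p \<Rightarrow> real" where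
  "partial_u F u k l = deriv (\<lambda>s. F (upd_param u k l s)) (u $ k $ l)"

definition fmod :: "real^'p^'h \<Rightarrow> 'p \<Rightarrow> 'p \<Rightarrow> real" where
  "fmod u i j = (\<Sum>k\<in>UNIV. u $ k $ i * u $ k $ j)"

definition ntk :: "real^'p^'h \<Rightarrow> 'p \<Rightarrow> 'p \<Rightarrow> 'p \<Rightarrow> 'p \<Rightarrow> real" where
  "ntk u i j i' j' = (\<Sum>k\<in>UNIV. \<Sum>l\<in>UNIV.
      partial_u (\<lambda>v. fmod v i j) u k l * partial_u (\<lambda>v. fmod v i' j') u k l)"

definition loss :: "real^'p^'h \<Rightarrow> real" where
  "loss u = (1/2) * (\<Sum>i\<in>UNIV. \<Sum>j\<in>UNIV. (fmod u i j - (if i = j then 1 else 0))^2)"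

definition grad_loss :: "real^'p^'h \<Rightarrow> real^'p^'h" where
  "grad_loss u = (\<chi> k. \<chi> l. partial_u loss u k l)"

end

theory Submission
  imports Defs
begin

text \<open>The kernel of the symmetric model is a fixed linear combination of its outputs,
  \<open>\<Theta>(i,j;i',j') = [i=i'] f(j,j') + [i=j'] f(j,i') + [j=i'] f(i,j') + [j=j'] f(i,i')\<close>,
  and conversely \<open>f(i,j) = \<Theta>(i,i;i,j) / (2 + 2 [i=j])\<close>. Hence along any path of parameters
  the kernel converges to its initial value iff the outputs do.\<close>

lemma partial_u_fmod:
  "partial_u (\<lambda>v. fmod v i j) u k l
     = (if l = i then u $ k $ j else 0) + (if l = j then u $ k $ i else 0)"
proof -
  let ?col_i = "\<lambda>s k'. if k' = k \<and> i = l then s else u $ k' $ i"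
  let ?col_j = "\<lambda>s k'. if k' = k \<and> j = l then s else u $ k' $ j"
  have fmod_upd: "(\<lambda>s. fmod (upd_param u k l s) i j) = (\<lambda>s. \<Sum>k'\<in>UNIV. ?col_i s k' * ?col_j s k')"
    by (auto simp: fmod_def upd_param_def intro!: ext sum.cong)
  have fmod_upd_deriv: "((\<lambda>s. \<Sum>k'\<in>UNIV. ?col_i s k' * ?col_j s k') has_field_derivative
      (\<Sum>k'\<in>UNIV. (if k' = k \<and> i = l then 1 else 0) * ?col_j s k'
                   + ?col_i s k' * (if k' = k \<and> j = l then 1 else 0))) (at s)" for s
    by (intro DERIV_sum DERIV_mult) (auto intro!: derivative_eq_intros)
  show ?thesis
    unfolding partial_u_def fmod_upd DERIV_imp_deriv[OF fmod_upd_deriv]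
    by (simp add: sum.distrib if_distrib[where f="\<lambda>x. x * _"]
        if_distrib[where f="\<lambda>x. _ * x"] cong: if_cong)
qed

lemma ntk_eq_fmod:
  "ntk u i j i' j' = (if i = i' then fmod u j j' else 0) + (if i = j' then fmod u j i' else 0)
     + (if j = i' then fmod u i j' else 0) + (if j = j' then fmod u i i' else 0)"
  unfolding ntk_def partial_u_fmod
  by (simp add: algebra_simps sum.distrib if_distrib[where f="\<lambda>x. x * _"]
      if_distrib[where f="\<lambda>x. _ * x"] fmod_def sum.delta cong: if_cong)

lemma fmod_eq_ntk: "fmod u i j = ntk u i i i j / (if i = j then 4 else 2)"
  by (simp add: ntk_eq_fmod)

lemma tendsto_ntk_iff_tendsto_fmod:
  "(\<forall>i j i' j'. ((\<lambda>t. ntk (v t) i j i' j') \<longlongrightarrow> ntk w i j i' j') F)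
     \<longleftrightarrow> (\<forall>i j. ((\<lambda>t. fmod (v t) i j) \<longlongrightarrow> fmod w i j) F)"
proof
  assume ntk_lim: "\<forall>i j i' j'. ((\<lambda>t. ntk (v t) i j i' j') \<longlongrightarrow> ntk w i j i' j') F"
  show "\<forall>i j. ((\<lambda>t. fmod (v t) i j) \<longlongrightarrow> fmod w i j) F"
    unfolding fmod_eq_ntk[of "v _"] fmod_eq_ntk[of w]
    using ntk_lim by (intro allI tendsto_divide) auto
next
  assume "\<forall>i j. ((\<lambda>t. fmod (v t) i j) \<longlongrightarrow> fmod w i j) F"
  then show "\<forall>i j i' j'. ((\<lambda>t. ntk (v t) i j i' j') \<longlongrightarrow> ntk w i j i' j') F"
    unfolding ntk_eq_fmod by (intro allI tendsto_add) auto
qed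

theorem proposition2:
  fixes u :: "real \<Rightarrow> real^'p^'h" and T :: real
  assumes "T > 0"
    and "\<forall>t\<ge>0. (u has_vector_derivative (- (1/T)) *\<^sub>R grad_loss (u t)) (at t within {0..})"
  shows "(\<forall>i j i' j'. ((\<lambda>t. ntk (u t) i j i' j') \<longlongrightarrow> ntk (u 0) i j i' j') at_top)
     \<longleftrightarrow> (\<forall>i j. ((\<lambda>t. fmod (u t) i j) \<longlongrightarrow> fmod (u 0) i j) at_top)"
  by (rule tendsto_ntk_iff_tendsto_fmod)

end
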